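(* Let $G$ be a graph and let $H=(v_1,v_2,C)$ be an induced subdivision of the $2$-pan in $G$ having the minimum number of vertices among all induced subdivisions of the $2$-pan in $G$, where $C$ is the cycle of $H$, $v_1$ is the vertex of degree $1$, and $v_2$ is the vertex of degree $2$ not on $C$. If $|V(C)|\ge 11$, then every vertex $v\in V(G)\setminus V(H)$ either has at most one neighbor in $V(C)$ or is adjacent to every vertex of $C$.
   Context: All graphs are finite and simple. An induced subdivision of a graph $F$ in $G$ is an induced subgraph of $G$ isomorphic to a graph obtained from $F$ by repeatedly replacing edges by paths of length $2$ through new vertices. The $2$-pan is the graph obtained from the disjoint union of a triangle and a path with $2$ edges by identifying one endpoint of the path with a vertex of the triangle; an induced subdivision of it consists of an induced cycle $C$ and an induced path $v_1v_2$ such that $v_2$ has exactly one neighbor on $C$ and $v_1$ has none. *)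

theory Defs
  imports Main
begin

definition graph :: "'a set \<Rightarrow> ('a \<Rightarrow> 'a \<Rightarrow> bool) \<Rightarrow> bool" where
  "graph V E \<longleftrightarrow> finite V \<and> (\<forall>u v. E u v \<longrightarrow> E v u) \<and> (\<forall>u. \<not> E u u)
     \<and> (\<forall>u v. E u v \<longrightarrow> u \<in> V \<and> v \<in> V)"

definition induced_cycle :: "'a set \<Rightarrow> ('a \<Rightarrow> 'a \<Rightarrow> bool) \<Rightarrow> 'a list \<Rightarrow> bool" where
  "induced_cycle V E C \<longleftrightarrow> length C \<ge> 3 \<and> distinct C \<and> set C \<subseteq> V \<and>
     (\<forall>i<length C. \<forall>j<length C.
        E (C ! i) (C ! j) \<longleftrightarrow> (j = Suc i mod length C \<or> i = Suc j mod length C))"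

definition pan2_subdiv :: "'a set \<Rightarrow> ('a \<Rightarrow> 'a \<Rightarrow> bool) \<Rightarrow> 'a \<Rightarrow> 'a \<Rightarrow> 'a list \<Rightarrow> bool" where
  "pan2_subdiv V E v1 v2 C \<longleftrightarrow> induced_cycle V E C \<and> v1 \<in> V \<and> v2 \<in> V \<and>
     v1 \<notin> set C \<and> v2 \<notin> set C \<and> v1 \<noteq> v2 \<and> E v1 v2 \<and>
     card {u \<in> set C. E v2 u} = 1 \<and> (\<forall>u\<in>set C. \<not> E v1 u)"

definition pan2_verts :: "'a \<Rightarrow> 'a \<Rightarrow> 'a list \<Rightarrow> 'a set" where
  "pan2_verts v1 v2 C = insert v1 (insert v2 (set C))"

end

theory Submission
  imports Defs
begin

text \<open>Suppose \<open>v\<close> has two neighbours on \<open>C\<close> but misses some vertex of \<open>C\<close>. Two neighbours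
  \<open>C!s\<close>, \<open>C!t\<close> of \<open>v\<close> with no neighbour strictly between them close an induced cycle through
  \<open>v\<close>; an induced path of length two hanging off such a cycle at a single vertex gives another
  induced 2-pan, so by minimality the cycle has at least \<open>|C|\<close> vertices.
  If some edge of \<open>C\<close> has no end adjacent to \<open>v\<close>, this forces the neighbours of \<open>v\<close> to be
  exactly the two vertices next to that edge, which is contradictory once the same
  argument is applied to the edge three steps further along \<open>C\<close>.
  Otherwise \<open>v\<close> sees an end of every edge of \<open>C\<close>, so these cycles have length at most four;
  taking one near or far from the attachment vertex of the path \<open>v\<^sub>1 v\<^sub>2\<close>, or the
  triangle \<open>v v\<^sub>1 v\<^sub>2\<close>, yields an induced 2-pan whose cycle is far shorter than \<open>C\<close>.\<close>

lemma obtain_two_least: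
  fixes A :: "'a::linorder set"
  assumes "finite A" "2 \<le> card A"
  obtains a b where "a \<in> A" "b \<in> A" "a < b" "\<And>i. i \<in> A \<Longrightarrow> i < b \<Longrightarrow> i = a"
proof -
  define a where "a = Min A"
  have "A \<noteq> {}" using assms(2) by auto
  then have a: "a \<in> A" "\<And>i. i \<in> A \<Longrightarrow> a \<le> i" unfolding a_def using assms(1) by auto
  have "A - {a} \<noteq> {}"
  proof
    assume "A - {a} = {}"
    then have "card A \<le> card {a}" using card_mono[of "{a}" A] by blast
    then show False using assms(2) by simp
  qed
  define b where "b = Min (A - {a})"
  have b: "b \<in> A" "b \<noteq> a" using Min_in[of "A - {a}"] assms(1) \<open>A - {a} \<noteq> {}\<close>
    unfolding b_def by auto
  have b_least: "b \<le> i" if "i \<in> A" "i \<noteq> a" for i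
    unfolding b_def using Min_le[of "A - {a}" i] assms(1) that by simp
  show thesis
  proof (rule that[OF a(1) b(1)])
    show "a < b" using a(2)[OF b(1)] b(2) by simp
    show "i = a" if "i \<in> A" "i < b" for i using b_least that by force
  qed
qed

lemma card_filter_nth:
  assumes "distinct C"
  shows "card {u \<in> set C. P u} = card {k. k < length C \<and> P (C!k)}"
proof -
  have "{u \<in> set C. P u} = nth C ` {k. k < length C \<and> P (C!k)}" by (auto simp: in_set_conv_nth)
  then show ?thesis using assms by (simp add: card_image inj_on_nth)
qed

lemma graph_sym: "graph V E \<Longrightarrow> E u w \<Longrightarrow> E w u"
  unfolding graph_def by blast

lemma graph_irrefl: "graph V E \<Longrightarrow> \<not> E u u"
  unfolding graph_def by blast

lemma graph_edge_vertex: "graph V E \<Longrightarrow> E u w \<Longrightarrow> u \<in> V"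
  unfolding graph_def by blast

lemma induced_cycle_adj:
  assumes "induced_cycle V E C" "i < length C" "j < length C"
  shows "E (C!i) (C!j) \<longleftrightarrow> j = Suc i mod length C \<or> i = Suc j mod length C"
  using assms unfolding induced_cycle_def by blast

lemma induced_cycle_adj_less:
  assumes "induced_cycle V E C" "i < j" "j < length C"
  shows "E (C!i) (C!j) \<longleftrightarrow> j = Suc i \<or> (i = 0 \<and> Suc j = length C)"
proof -
  have "Suc i mod length C = Suc i" using assms(2,3) by simp
  moreover have "Suc j mod length C = (if Suc j = length C then 0 else Suc j)"
    using assms(3) by (simp add: mod_Suc)
  ultimately show ?thesis using induced_cycle_adj[OF assms(1)] assms(2,3) by auto
qed

lemma induced_cycle_rotate:
  assumes "induced_cycle V E C"
  shows "induced_cycle V E (rotate t C)"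
proof -
  let ?n = "length C"
  have "?n > 0" using assms unfolding induced_cycle_def by auto
  have shift: "(t + j) mod ?n = Suc ((t + i) mod ?n) mod ?n \<longleftrightarrow> j = Suc i mod ?n"
    if "i < ?n" "j < ?n" for i j
  proof -
    have "Suc ((t + i) mod ?n) mod ?n = (t + Suc i) mod ?n" by (simp add: mod_Suc_eq)
    moreover have "(t + j) mod ?n = (t + Suc i) mod ?n \<longleftrightarrow> j mod ?n = Suc i mod ?n"
      by (simp add: nat_mod_eq_iff)
    ultimately show ?thesis using that by simp
  qed
  show ?thesis
    unfolding induced_cycle_def
  proof (intro conjI allI impI)
    fix i j assume i: "i < length (rotate t C)" and j: "j < length (rotate t C)"
    have "E (rotate t C ! i) (rotate t C ! j) \<longleftrightarrow> E (C ! ((t + i) mod ?n)) (C ! ((t + j) mod ?n))"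
      using i j by (simp add: nth_rotate)
    also have "\<dots> \<longleftrightarrow> j = Suc i mod ?n \<or> i = Suc j mod ?n"
      using induced_cycle_adj[OF assms, of "(t + i) mod ?n" "(t + j) mod ?n"] shift i j \<open>?n > 0\<close>
      by simp
    finally show "E (rotate t C ! i) (rotate t C ! j) \<longleftrightarrow>
        j = Suc i mod length (rotate t C) \<or> i = Suc j mod length (rotate t C)"
      by simp
  qed (use assms in \<open>auto simp: induced_cycle_def\<close>)
qed

lemma rotate_nth_obtain:
  assumes "u \<in> set C" "k < length C"
  obtains t where "rotate t C ! k = u"
proof -
  obtain i where i: "i < length C" "C!i = u" using assms(1) by (auto simp: in_set_conv_nth)
  let ?t = "i + length C - k"
  have "(?t + k) mod length C = i" using i assms(2) by simp
  then have "rotate ?t C ! k = u" using i assms(2) by (simp add: nth_rotate)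
  then show thesis by (rule that)
qed

lemma induced_cycle_two_neighbours:
  assumes C: "induced_cycle V E C" and u: "u \<in> set C"
  obtains x y where "x \<in> set C" "y \<in> set C" "x \<noteq> y" "E u x" "E u y"
proof -
  have n: "3 \<le> length C" and dC: "distinct C" using C unfolding induced_cycle_def by auto
  have "0 < length C" using n by linarith
  then obtain t where t: "rotate t C ! 0 = u" by (rule rotate_nth_obtain[OF u])
  let ?R = "rotate t C"
  have R: "induced_cycle V E ?R" "length ?R = length C" "distinct ?R" "set ?R = set C"
    using induced_cycle_rotate[OF C] dC by simp_all
  have "E u (?R ! 1)" "E u (?R ! (length C - 1))"
    using induced_cycle_adj_less[OF R(1), of 0 1] induced_cycle_adj_less[OF R(1), of 0 "length C - 1"] t n R(2)
    by auto
  moreover have "?R ! 1 \<noteq> ?R ! (length C - 1)" using R(2,3) n by (simp add: nth_eq_iff_index_eq)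
  moreover have "?R ! 1 \<in> set C" "?R ! (length C - 1) \<in> set C"
    using nth_mem[of 1 ?R] nth_mem[of "length C - 1" ?R] R(2,4) n by auto
  ultimately show thesis using that by blast
qed

lemma induced_cycle_triangle:
  assumes "graph V E" "E a b" "E b c" "E c a"
  shows "induced_cycle V E [a, b, c]"
proof -
  have sym: "E x y \<Longrightarrow> E y x" and irr: "\<not> E x x" for x y
    using graph_sym[OF assms(1)] graph_irrefl[OF assms(1)] by blast+
  show ?thesis
    unfolding induced_cycle_def
  proof (intro conjI allI impI)
    show "distinct [a, b, c]" using assms(2-4) irr by auto
    show "set [a, b, c] \<subseteq> V" using assms(2-4) graph_edge_vertex[OF assms(1)] by auto
    fix i j assume "i < length [a, b, c]" "j < length [a, b, c]"
    then have "i = 0 \<or> i = 1 \<or> i = 2" "j = 0 \<or> j = 1 \<or> j = 2" by auto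
    then show "E ([a, b, c] ! i) ([a, b, c] ! j) \<longleftrightarrow>
        j = Suc i mod length [a, b, c] \<or> i = Suc j mod length [a, b, c]"
      using assms(2-4) sym[OF assms(2)] sym[OF assms(3)] sym[OF assms(4)] irr
      by (elim disjE) simp_all
  qed simp
qed

lemma induced_cycle_gap:
  assumes G: "graph V E" and C: "induced_cycle V E C" and vC: "v \<notin> set C"
    and st: "s < t" "t < length C" "t - s + 2 \<le> length C"
    and ends: "E v (C!s)" "E v (C!t)" and gap: "\<And>i. s < i \<Longrightarrow> i < t \<Longrightarrow> \<not> E v (C!i)"
  shows "induced_cycle V E (v # map (nth C) [s..<Suc t])"
proof -
  let ?D = "v # map (nth C) [s..<Suc t]" and ?L = "t - s + 2"
  have sym: "E x y \<Longrightarrow> E y x" and irr: "\<not> E x x" for x y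
    using graph_sym[OF G] graph_irrefl[OF G] by blast+
  have dC: "distinct C" and sC: "set C \<subseteq> V" using C unfolding induced_cycle_def by auto
  have D_Suc: "?D ! Suc k = C!(s + k)" if "k \<le> t - s" for k
    using that st by (simp del: upt_Suc add: nth_map)
  have arc_adj: "E (C!(s + k)) (C!(s + l)) \<longleftrightarrow> l = Suc k \<or> k = Suc l"
    if "k \<le> t - s" "l \<le> t - s" for k l
  proof (cases k l rule: linorder_cases)
    case less
    then show ?thesis using induced_cycle_adj_less[OF C, of "s + k" "s + l"] that st by auto
  next
    case greater
    have "E (C!(s + k)) (C!(s + l)) \<longleftrightarrow> E (C!(s + l)) (C!(s + k))" using sym by blast
    then show ?thesis using induced_cycle_adj_less[OF C, of "s + l" "s + k"] greater that st by auto
  qed (simp add: irr)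
  have v_adj: "E v (C!(s + k)) \<longleftrightarrow> k = 0 \<or> k = t - s" if "k \<le> t - s" for k
  proof (cases "k = 0 \<or> k = t - s")
    case False
    then have "s < s + k" "s + k < t" using that by auto
    then show ?thesis using gap False by blast
  qed (use st ends in auto)
  show ?thesis
    unfolding induced_cycle_def
  proof (intro conjI allI impI)
    show "3 \<le> length ?D" using st by simp
    show "distinct ?D" using dC vC st by (auto simp: distinct_map inj_on_nth nth_eq_iff_index_eq)
    show "set ?D \<subseteq> V" using sC st graph_edge_vertex[OF G ends(1)] by auto
    fix i j assume i: "i < length ?D" and j: "j < length ?D"
    have L: "length ?D = ?L" using st by simp
    show "E (?D ! i) (?D ! j) \<longleftrightarrow> j = Suc i mod length ?D \<or> i = Suc j mod length ?D"
    proof (cases i; cases j)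
      fix j' assume "i = 0" "j = Suc j'"
      then show ?thesis using v_adj[of j'] D_Suc[of j'] i j L st by (auto simp: mod_Suc)
    next
      fix i' assume "i = Suc i'" "j = 0"
      then show ?thesis using v_adj[of i'] D_Suc[of i'] i j L st sym by (auto simp: mod_Suc)
    next
      fix i' j' assume "i = Suc i'" "j = Suc j'"
      then show ?thesis using arc_adj[of i' j'] D_Suc[of i'] D_Suc[of j'] i j L st
        by (auto simp: mod_Suc)
    qed (use irr st in simp)
  qed
qed

definition hits_every_edge :: "('a \<Rightarrow> 'a \<Rightarrow> bool) \<Rightarrow> 'a \<Rightarrow> 'a list \<Rightarrow> bool" where
  "hits_every_edge E v C \<longleftrightarrow> (\<forall>u\<in>set C. \<forall>w\<in>set C. E u w \<longrightarrow> E v u \<or> E v w)"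

lemma hits_every_edge_nth:
  assumes "hits_every_edge E v C" "induced_cycle V E C" "Suc i < length C"
  shows "E v (C!i) \<or> E v (C!Suc i)"
  using assms induced_cycle_adj_less[OF assms(2), of i "Suc i"]
  unfolding hits_every_edge_def by simp

lemma hits_every_edge_rotate [simp]: "hits_every_edge E v (rotate t C) \<longleftrightarrow> hits_every_edge E v C"
  unfolding hits_every_edge_def by simp

lemma short_cycle_through:
  assumes G: "graph V E" and C: "induced_cycle V E C" and vC: "v \<notin> set C"
    and hit: "hits_every_edge E v C" and k: "2 \<le> k" "k + 2 < length C"
  obtains D where "induced_cycle V E D" "length D \<le> 4" "v \<in> set D" "C!k \<in> set D"
    "set D \<subseteq> insert v (nth C ` {k - 2..k + 2})"
proof -
  note found = that
  have gap_cycle: thesis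
    if "s < t" "t \<le> s + 2" "k - 2 \<le> s" "s \<le> k" "k \<le> t" "t \<le> k + 2"
      "E v (C!s)" "E v (C!t)" "\<And>i. s < i \<Longrightarrow> i < t \<Longrightarrow> \<not> E v (C!i)" for s t
  proof (rule found)
    let ?D = "v # map (nth C) [s..<Suc t]"
    show "induced_cycle V E ?D"
      by (rule induced_cycle_gap[OF G C vC]) (use that k in auto)
    show "length ?D \<le> 4" "v \<in> set ?D" using that by auto
    have "k \<in> {s..<Suc t}" using that by simp
    then show "C!k \<in> set ?D" by (simp del: upt_Suc)
    show "set ?D \<subseteq> insert v (nth C ` {k - 2..k + 2})" using that by auto
  qed
  show thesis
  proof (cases "E v (C!k)")
    case True
    show thesis
    proof (cases "E v (C!Suc k)")
      case True
      then show thesis using gap_cycle[of k "Suc k"] \<open>E v (C!k)\<close> by simp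
    next
      case False
      then have "E v (C!(k + 2))" using hits_every_edge_nth[OF hit C, of "Suc k"] k by simp
      then show thesis
        using gap_cycle[of k "k + 2"] \<open>E v (C!k)\<close> False by (simp add: less_Suc_eq)
    qed
  next
    case False
    then have "E v (C!(k - 1))" "E v (C!(k + 1))"
      using hits_every_edge_nth[OF hit C, of "k - 1"] hits_every_edge_nth[OF hit C, of k] k by auto
    moreover have "\<not> E v (C!i)" if "k - 1 < i" "i < k + 1" for i
    proof -
      have "i = k" using that k by arith
      then show ?thesis using False by simp
    qed
    ultimately show thesis using k by (intro gap_cycle[of "k - 1" "k + 1"]) auto
  qed
qed

lemma short_cycle_at:
  assumes G: "graph V E" and C: "induced_cycle V E C" and vC: "v \<notin> set C"
    and hit: "hits_every_edge E v C" and n: "5 \<le> length C" and w: "w \<in> set C"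
  obtains D where "induced_cycle V E D" "length D \<le> 4" "w \<in> set D" "set D \<subseteq> insert v (set C)"
proof -
  have "2 < length C" using n by linarith
  then obtain t where t: "rotate t C ! 2 = w" by (rule rotate_nth_obtain[OF w])
  let ?R = "rotate t C"
  have R: "induced_cycle V E ?R" "length ?R = length C" "set ?R = set C" "hits_every_edge E v ?R"
    using induced_cycle_rotate[OF C] hit by simp_all
  obtain D where D: "induced_cycle V E D" "length D \<le> 4" "?R ! 2 \<in> set D"
      "set D \<subseteq> insert v (nth ?R ` {2 - 2..2 + 2})"
    by (rule short_cycle_through[OF G R(1) _ R(4)]) (use vC R(2,3) n in auto)
  have "nth ?R ` {2 - 2..2 + 2} \<subseteq> set C" using nth_mem[of _ ?R] R(2,3) n by auto
  then show thesis using that D t by blast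
qed

lemma short_cycle_avoiding:
  assumes G: "graph V E" and C: "induced_cycle V E C" and vC: "v \<notin> set C"
    and hit: "hits_every_edge E v C" and n: "8 \<le> length C" and w: "w \<in> set C"
  obtains D where "induced_cycle V E D" "length D \<le> 4" "v \<in> set D" "set D \<subseteq> insert v (set C)"
    "w \<notin> set D" "\<And>u. u \<in> set D \<Longrightarrow> \<not> E w u \<or> u = v"
proof -
  have "0 < length C" using n by linarith
  then obtain t where t: "rotate t C ! 0 = w" by (rule rotate_nth_obtain[OF w])
  let ?R = "rotate t C"
  have R: "induced_cycle V E ?R" "length ?R = length C" "set ?R = set C" "hits_every_edge E v ?R"
      "distinct ?R"
    using induced_cycle_rotate[OF C] hit C
    by (simp_all add: induced_cycle_def)
  obtain D where D: "induced_cycle V E D" "length D \<le> 4" "v \<in> set D"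
      "set D \<subseteq> insert v (nth ?R ` {4 - 2..4 + 2})"
    by (rule short_cycle_through[OF G R(1) _ R(4), where k=4]) (use vC R(2,3) n in auto)
  have far: "?R ! j \<noteq> w \<and> \<not> E w (?R ! j)" if "j \<in> {2..6}" for j
  proof
    have "j < length ?R" "0 < length ?R" using that R(2) n by auto
    then have "?R ! j \<noteq> ?R ! 0" using nth_eq_iff_index_eq[OF R(5)] that by fastforce
    then show "?R ! j \<noteq> w" using t by simp
    show "\<not> E w (?R ! j)" using induced_cycle_adj_less[OF R(1), of 0 j] t that R(2) n by auto
  qed
  have "nth ?R ` {2..6} \<subseteq> set C" using nth_mem[of _ ?R] R(2,3) n by auto
  show thesis
  proof (rule that[OF D(1-3)])
    show "set D \<subseteq> insert v (set C)" using D(4) \<open>nth ?R ` {2..6} \<subseteq> set C\<close> by auto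
    show "w \<notin> set D"
    proof
      assume "w \<in> set D"
      moreover have "w \<noteq> v" using vC w by auto
      ultimately show False using D(4) far by fastforce
    qed
    show "\<not> E w u \<or> u = v" if "u \<in> set D" for u using D(4) far that by auto
  qed
qed

lemma card_pan2_verts:
  assumes "pan2_subdiv V E x y D"
  shows "card (pan2_verts x y D) = length D + 2"
  using assms unfolding pan2_subdiv_def pan2_verts_def induced_cycle_def by (simp add: distinct_card)

lemma pan2_subdiv_attachment:
  assumes "pan2_subdiv V E v1 v2 C"
  obtains w where "{u \<in> set C. E v2 u} = {w}"
proof -
  have "card {u \<in> set C. E v2 u} = 1" using assms unfolding pan2_subdiv_def by blast
  then show thesis using that by (rule card_1_singletonE)
qed

locale minimal_pan2 =
  fixes V :: "'a set" and E :: "'a \<Rightarrow> 'a \<Rightarrow> bool" and n :: nat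
  assumes graph: "graph V E"
    and pan2_length_ge: "\<And>x y D. pan2_subdiv V E x y D \<Longrightarrow> n \<le> length D"
begin

lemma adj_sym: "E u w \<Longrightarrow> E w u"
  using graph_sym[OF graph] .

lemma pendant_length_ge:
  assumes "induced_cycle V E D" "x \<notin> set D" "y \<notin> set D" "E x y"
    "{u \<in> set D. E y u} = {w}" "\<forall>u\<in>set D. \<not> E x u"
  shows "n \<le> length D"
proof (rule pan2_length_ge)
  have "x \<in> V" "y \<in> V" "x \<noteq> y"
    using assms(4) graph_edge_vertex[OF graph] adj_sym graph_irrefl[OF graph] by metis+
  then show "pan2_subdiv V E x y D" using assms unfolding pan2_subdiv_def by simp
qed

lemma first_two_neighbours:
  assumes C: "induced_cycle V E C" and len: "length C = n" and vC: "v \<notin> set C"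
    and ab: "2 \<le> a" "a < b" "b < n" and nbr: "E v (C!a)" "E v (C!b)"
    and no_nbr: "\<And>i. i < b \<Longrightarrow> i \<noteq> a \<Longrightarrow> \<not> E v (C!i)"
  shows "a = 2 \<and> Suc b = n"
proof (rule ccontr)
  assume not_wrap: "\<not> (a = 2 \<and> Suc b = n)"
  let ?D = "v # map (nth C) [a..<Suc b]" and ?x = "C!(a - 2)" and ?y = "C!(a - 1)"
  have D: "induced_cycle V E ?D"
    by (rule induced_cycle_gap[OF graph C vC]) (use ab len nbr no_nbr in auto)
  have setD: "set ?D = insert v (nth C ` {a..b})" by auto
  have idx: "C!i = C!j \<longleftrightarrow> i = j" if "i < n" "j < n" for i j
    using C nth_eq_iff_index_eq that len unfolding induced_cycle_def by blast
  have outside: "C!i \<notin> set ?D" if "i < a" for i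
    using that ab idx vC len by (auto simp: setD)
  have "\<not> E ?x v" "\<not> E ?y v" using no_nbr[of "a - 2"] no_nbr[of "a - 1"] adj_sym ab by force+
  \<comment> \<open>The path \<open>?x ?y\<close> hangs off the cycle \<open>?D\<close> at \<open>C!a\<close>, unless \<open>?x\<close> and \<open>C!b\<close> are adjacent.\<close>
  have "n \<le> length ?D"
  proof (rule pendant_length_ge[OF D outside outside, where w = "C!a"])
    show "E ?x ?y" using induced_cycle_adj_less[OF C, of "a - 2" "a - 1"] ab len by simp
    show "{u \<in> set ?D. E ?y u} = {C!a}"
    proof
      show "{C!a} \<subseteq> {u \<in> set ?D. E ?y u}"
        using induced_cycle_adj_less[OF C, of "a - 1" a] ab len by (auto simp: setD)
      show "{u \<in> set ?D. E ?y u} \<subseteq> {C!a}"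
        using induced_cycle_adj_less[OF C, of "a - 1"] \<open>\<not> E ?y v\<close> ab len by (auto simp: setD)
    qed
    show "\<forall>u\<in>set ?D. \<not> E ?x u"
      using induced_cycle_adj_less[OF C, of "a - 2"] \<open>\<not> E ?x v\<close> ab len not_wrap
      by (auto simp: setD)
  qed (use ab in auto)
  then show False using ab by simp
qed

lemma free_edge_neighbours:
  assumes C: "induced_cycle V E C" and len: "length C = n" and vC: "v \<notin> set C"
    and two: "2 \<le> card {u \<in> set C. E v u}" and free: "\<not> E v (C!0)" "\<not> E v (C!1)"
    and k: "k < n"
  shows "E v (C!k) \<longleftrightarrow> k = 2 \<or> Suc k = n"
proof -
  have dC: "distinct C" using C unfolding induced_cycle_def by auto
  define A where "A = {k. k < n \<and> E v (C!k)}"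
  have "finite A" "2 \<le> card A" unfolding A_def using two card_filter_nth[OF dC] len by auto
  then obtain a b where a: "a \<in> A" and b: "b \<in> A" "a < b" "\<And>i. i \<in> A \<Longrightarrow> i < b \<Longrightarrow> i = a"
    using obtain_two_least by blast
  have nbr: "E v (C!a)" "E v (C!b)" and "b < n" using a b(1) unfolding A_def by auto
  have no_nbr: "\<not> E v (C!i)" if "i < b" "i \<noteq> a" for i
    using b(3)[of i] that \<open>b < n\<close> unfolding A_def by auto
  have "a \<noteq> 0" "a \<noteq> 1" using nbr(1) free by metis+
  then have "2 \<le> a" by linarith
  then have ends: "a = 2 \<and> Suc b = n"
    using first_two_neighbours[OF C len vC _ b(2) \<open>b < n\<close> nbr no_nbr] by blast
  show ?thesis
  proof
    assume "E v (C!k)"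
    then show "k = 2 \<or> Suc k = n" using no_nbr[of k] ends k by (cases "k < b") auto
  qed (use nbr ends in auto)
qed

lemma hits_every_edge_if_two_neighbours:
  assumes C: "induced_cycle V E C" and len: "length C = n" and n: "7 \<le> n" and vC: "v \<notin> set C"
    and two: "2 \<le> card {u \<in> set C. E v u}"
  shows "hits_every_edge E v C"
proof (rule ccontr)
  assume "\<not> hits_every_edge E v C"
  then obtain u w where uw: "u \<in> set C" "w \<in> set C" "E u w" "\<not> E v u" "\<not> E v w"
    unfolding hits_every_edge_def by blast
  obtain i j where ij: "i < n" "j < n" "C!i = u" "C!j = w"
    using uw(1,2) len by (auto simp: in_set_conv_nth)
  then have "j = Suc i mod n \<or> i = Suc j mod n" using induced_cycle_adj[OF C] uw(3) len by auto
  then obtain t where t: "t < n" "\<not> E v (C!t)" "\<not> E v (C!(Suc t mod n))"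
    using ij uw(4,5) by auto
  let ?R = "rotate t C"
  have R: "induced_cycle V E ?R" "length ?R = n" "set ?R = set C"
    using induced_cycle_rotate[OF C] len by simp_all
  have "?R ! 0 = C!t" "?R ! 1 = C!(Suc t mod n)" using t(1) len n by (simp_all add: nth_rotate)
  then have nbrR: "E v (?R!k) \<longleftrightarrow> k = 2 \<or> Suc k = n" if "k < n" for k
    using free_edge_neighbours[OF R(1,2)] vC two t R(3) that by simp
  \<comment> \<open>Position 3 of \<open>?R\<close> starts another edge free of neighbours of \<open>v\<close>.\<close>
  let ?S = "rotate 3 ?R"
  have S: "induced_cycle V E ?S" "length ?S = n" "set ?S = set C"
    using induced_cycle_rotate[OF R(1)] R by simp_all
  have S_nth: "?S ! k = ?R ! (3 + k)" if "k \<le> 2" for k using that R(2) n by (simp add: nth_rotate)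
  have "E v (?S ! 2)"
    using free_edge_neighbours[OF S(1,2), of v 2] vC two S(3) S_nth[of 0] S_nth[of 1] nbrR n by simp
  then show False using S_nth[of 2] nbrR[of 5] n by simp
qed

end

locale pan2_cover_vertex = minimal_pan2 +
  fixes v1 v2 w :: 'a and C :: "'a list" and v :: 'a
  assumes pan: "pan2_subdiv V E v1 v2 C" and attachment: "{u \<in> set C. E v2 u} = {w}"
    and len: "length C = n" and v_outside: "v \<notin> pan2_verts v1 v2 C"
    and hit: "hits_every_edge E v C"
begin

lemma cycle: "induced_cycle V E C"
  and tail_outside: "v1 \<notin> set C" "v2 \<notin> set C"
  and tail_edge: "E v1 v2"
  and tail_end: "\<And>u. u \<in> set C \<Longrightarrow> \<not> E v1 u"
  using pan unfolding pan2_subdiv_def by blast+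

lemma vertex_outside: "v \<notin> set C" "v \<noteq> v1" "v \<noteq> v2"
  using v_outside unfolding pan2_verts_def by blast+

lemma attachment_in_cycle: "w \<in> set C"
  and attachment_edge: "E v2 w"
  and attachment_unique: "\<And>u. u \<in> set C \<Longrightarrow> E v2 u \<Longrightarrow> u = w"
  using attachment by auto

lemma tail_adjacent:
  assumes n: "5 \<le> n"
  shows "E v v1 \<or> E v v2"
proof (rule ccontr)
  assume "\<not> (E v v1 \<or> E v v2)"
  then have nv: "\<not> E v1 v" "\<not> E v2 v" using adj_sym by blast+
  obtain D where D: "induced_cycle V E D" "length D \<le> 4" "w \<in> set D" "set D \<subseteq> insert v (set C)"
    by (rule short_cycle_at[OF graph cycle vertex_outside(1) hit n[folded len] attachment_in_cycle])
  have "n \<le> length D"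
  proof (rule pendant_length_ge[OF D(1) _ _ tail_edge, where w = w])
    show "v1 \<notin> set D" "v2 \<notin> set D" using D(4) tail_outside vertex_outside by auto
    show "{u \<in> set D. E v2 u} = {w}" using D(3,4) attachment nv by auto
    show "\<forall>u\<in>set D. \<not> E v1 u" using D(4) nv tail_end by auto
  qed
  then show False using D(2) n by simp
qed

lemma far_cycle:
  assumes n: "8 \<le> n"
  obtains D where "induced_cycle V E D" "length D \<le> 4" "v \<in> set D" "set D \<subseteq> insert v (set C)"
    "w \<notin> set D" "\<And>u. u \<in> set D \<Longrightarrow> \<not> E w u \<or> u = v"
  using short_cycle_avoiding[OF graph cycle vertex_outside(1) hit n[folded len] attachment_in_cycle] that
  by blast

lemma tail_adjacency_eq:
  assumes n: "8 \<le> n"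
  shows "E v v1 \<longleftrightarrow> E v v2"
proof -
  obtain D where D: "induced_cycle V E D" "length D \<le> 4" "v \<in> set D" "set D \<subseteq> insert v (set C)"
      "w \<notin> set D" "\<And>u. u \<in> set D \<Longrightarrow> \<not> E w u \<or> u = v"
    by (fact far_cycle[OF n])
  have tail: "v1 \<notin> set D" "v2 \<notin> set D" using D(4) tail_outside vertex_outside by auto
  have off_v: "u \<in> set C" if "u \<in> set D" "u \<noteq> v" for u using that D(4) by blast
  have v1_D: "\<not> E v1 u" if "u \<in> set D" "u \<noteq> v" for u using tail_end off_v[OF that] .
  have v2_D: "\<not> E v2 u" if "u \<in> set D" "u \<noteq> v" for u using attachment_unique off_v[OF that] that(1) D(5) by blast
  have "n \<le> length D" if "E v v2" "\<not> E v v1"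
  proof (rule pendant_length_ge[OF D(1) tail tail_edge, where w = v])
    show "{u \<in> set D. E v2 u} = {v}" using D(3) v2_D adj_sym[OF that(1)] by blast
    show "\<forall>u\<in>set D. \<not> E v1 u" using v1_D that(2) adj_sym by blast
  qed
  moreover have "n \<le> length D" if "E v v1" "\<not> E v v2"
  proof (rule pendant_length_ge[OF D(1) tail(2,1) adj_sym[OF tail_edge], where w = v])
    show "{u \<in> set D. E v1 u} = {v}" using D(3) v1_D adj_sym[OF that(1)] by blast
    show "\<forall>u\<in>set D. \<not> E v2 u" using v2_D that(2) adj_sym by blast
  qed
  ultimately show ?thesis using D(2) n by force
qed

lemma attachment_adjacent:
  assumes n: "8 \<le> n" and "E v v1" "E v v2"
  shows "E v w"
proof (rule ccontr)
  assume "\<not> E v w"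
  obtain D where D: "induced_cycle V E D" "length D \<le> 4" "v \<in> set D" "set D \<subseteq> insert v (set C)"
      "w \<notin> set D" "\<And>u. u \<in> set D \<Longrightarrow> \<not> E w u \<or> u = v"
    by (fact far_cycle[OF n])
  have "n \<le> length D"
  proof (rule pendant_length_ge[OF D(1) D(5) _ adj_sym, where w = v])
    show "v2 \<notin> set D" using D(4) tail_outside vertex_outside by auto
    show "E v2 w" by (rule attachment_edge)
    have "\<not> E v2 u" if "u \<in> set D" "u \<noteq> v" for u using that D(4,5) attachment by auto
    then show "{u \<in> set D. E v2 u} = {v}" using D(3) adj_sym[OF assms(3)] by auto
    show "\<forall>u\<in>set D. \<not> E w u" using D(6) \<open>\<not> E v w\<close> adj_sym by blast
  qed
  then show False using D(2) n by simp
qed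

lemma adjacent_to_all_if_triangle:
  assumes n: "4 \<le> n" and adj: "E v v1" "E v v2" "E v w"
  shows "\<forall>u\<in>set C. E v u"
proof (rule ccontr)
  assume "\<not> (\<forall>u\<in>set C. E v u)"
  then obtain u where u: "u \<in> set C" "\<not> E v u" by blast
  obtain x y where "x \<in> set C" "y \<in> set C" "x \<noteq> y" "E u x" "E u y"
    by (rule induced_cycle_two_neighbours[OF cycle u(1)])
  then obtain x where x: "x \<in> set C" "x \<noteq> w" "E u x" by blast
  have "E v x" using hit u x unfolding hits_every_edge_def by blast
  have T: "induced_cycle V E [v, v1, v2]"
    using induced_cycle_triangle[OF graph adj(1) tail_edge adj_sym[OF adj(2)]] .
  have "n \<le> length [v, v1, v2]"
  proof (rule pendant_length_ge[OF T _ _ x(3), where w = v])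
    show "u \<notin> set [v, v1, v2]" "x \<notin> set [v, v1, v2]"
      using u(1) x(1) vertex_outside tail_outside by auto
    have "\<not> E x v1" "\<not> E x v2"
      using tail_end[OF x(1)] attachment_unique[OF x(1)] x(2) adj_sym by blast+
    then show "{z \<in> set [v, v1, v2]. E x z} = {v}" using adj_sym[OF \<open>E v x\<close>] by auto
    have "u \<noteq> w" using u(2) adj(3) by blast
    then have "\<not> E u v" "\<not> E u v1" "\<not> E u v2"
      using u tail_end[OF u(1)] attachment_unique[OF u(1)] adj_sym by blast+
    then show "\<forall>z\<in>set [v, v1, v2]. \<not> E u z" by simp
  qed
  then show False using n by simp
qed

lemma adjacent_to_all:
  assumes n: "8 \<le> n"
  shows "\<forall>u\<in>set C. E v u"
proof -
  have "E v v1" "E v v2" using tail_adjacent tail_adjacency_eq n by auto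
  then show ?thesis using adjacent_to_all_if_triangle attachment_adjacent n by simp
qed

end

theorem mainTheorem14:
  fixes V :: "'a set" and E :: "'a \<Rightarrow> 'a \<Rightarrow> bool"
  assumes "graph V E"
    and "pan2_subdiv V E v1 v2 C"
    and "\<And>w1 w2 D. pan2_subdiv V E w1 w2 D \<Longrightarrow>
           card (pan2_verts v1 v2 C) \<le> card (pan2_verts w1 w2 D)"
    and "card (set C) \<ge> 11"
    and "v \<in> V - pan2_verts v1 v2 C"
  shows "card {u \<in> set C. E v u} \<le> 1 \<or> (\<forall>u\<in>set C. E v u)"
proof (cases "card {u \<in> set C. E v u} \<le> 1")
  case False
  have C: "induced_cycle V E C" using assms(2) unfolding pan2_subdiv_def by blast
  have n: "11 \<le> length C" using assms(4) card_length le_trans by blast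
  interpret minimal_pan2 V E "length C"
  proof
    show "length C \<le> length D" if "pan2_subdiv V E x y D" for x y D
      using assms(3)[OF that] card_pan2_verts[OF that] card_pan2_verts[OF assms(2)] by simp
  qed (rule assms(1))
  have vC: "v \<notin> set C" using assms(5) unfolding pan2_verts_def by blast
  have "hits_every_edge E v C"
    using hits_every_edge_if_two_neighbours[OF C refl _ vC] False n by simp
  obtain w where "{u \<in> set C. E v2 u} = {w}" using pan2_subdiv_attachment[OF assms(2)] .
  then interpret pan2_cover_vertex V E "length C" v1 v2 w C v
    using assms(2,5) \<open>hits_every_edge E v C\<close> by unfold_locales auto
  show ?thesis using adjacent_to_all n by simp
qed simp

end
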